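(* Let $a,b,c$ be positive integers and $\vec k=(a,b,c)$. Every $\pi\in\mathcal D_{(a,b,c)}$ can be written uniquely as $$\pi=S^{a}W^{\ell_1}S^{b}W^{\ell_2}S^{c}W^{a+b+c-\ell_1-\ell_2}$$ with integers $\ell_1,\ell_2$ satisfying $0\le\ell_1\le a$, $0\le\ell_2$, $\ell_1+\ell_2\le a+b$ (here $W^{n}$ denotes $n$ consecutive letters $W$). Define $\theta$ on $\mathcal D_{(a,b,c)}$ by $$\theta(\pi)=\begin{cases} S^{a}W^{a-\ell_1}S^{b}W^{b-\ell_2}S^{c}W^{c+\ell_1+\ell_2}, & \text{if } \ell_2\le b,\\ S^{a}W^{a+b-\ell_1-\ell_2}S^{b}W^{\ell_2}S^{c}W^{c+\ell_1}, & \text{otherwise.}\end{cases}$$ Then $\theta$ is an involution on $\mathcal D_{(a,b,c)}$ satisfying $\mathrm{area}(\pi)=\mathrm{depth}(\theta(\pi))$ and $\mathrm{depth}(\pi)=\mathrm{area}(\theta(\pi))$ for all $\pi\in\mathcal D_{(a,b,c)}$.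
   Context: For $\vec k=(k_1,\dots,k_\ell)$ put $|\vec k|=\sum k_i$, $N=|\vec k|+\ell$. A $\vec k$-Dyck path is a word $\pi=\pi_1\cdots\pi_N$ containing the letters $S^{k_1},\dots,S^{k_\ell}$ exactly once each and in this order, together with $|\vec k|$ letters $W$, such that all starting ranks are nonnegative, where $r_1=0$, $r_{i+1}=r_i+k_j$ if $\pi_i=S^{k_j}$ and $r_{i+1}=r_i-1$ if $\pi_i=W$. $\mathcal D_{\vec k}$ is the set of such paths. $\mathrm{area}(\pi)=\sum_j a_j$ where $a_j$ is the starting rank of $S^{k_j}$. Filling algorithm $\eta_*$: in a tableau of $\ell$ top-justified columns, column $i$ having $k_i+1$ cells, place $1$ at the top of column 1; for $i=2,\dots,N$, call an entry active if it is currently the bottom entry of a column $i'$ not yet containing $k_{i'}+1$ entries; if $\pi_i=W$ place $i$ immediately below the largest active entry, otherwise place $i$ at the top of the first empty column. Ranking algorithm $\gamma_*$: column 1 gets ranks $0,\dots,k_1$ top to bottom; for $i\ge2$, if the top entry of column $i$ of $\eta_*(\pi)$ is $A+1$ and $A$ has rank $\alpha$, column $i$ gets ranks $\alpha,\dots,\alpha+k_i$ top to bottom. $\mathrm{depth}(\pi)$ is the sum of the first-row ranks. *)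

theory Defs
  imports Main
begin

text \<open>Letters of a k-Dyck path: S j stands for the letter S^{k_j} (0-based index j),
  W is the letter W.\<close>
datatype letter = S nat | W

fun is_S :: "letter \<Rightarrow> bool" where
  "is_S (S j) = True" | "is_S W = False"

fun step :: "nat list \<Rightarrow> letter \<Rightarrow> int" where
  "step k (S j) = int (k ! j)" | "step k W = -1"

text \<open>Starting rank of the letter at (0-based) position i: r_{i+1} in the paper.\<close>
definition srank :: "nat list \<Rightarrow> letter list \<Rightarrow> nat \<Rightarrow> int" where
  "srank k p i = sum_list (map (step k) (take i p))"

definition dyck :: "nat list \<Rightarrow> letter list set" where
  "dyck k = {p. filter is_S p = map S [0..<length k]
              \<and> length (filter (\<lambda>x. x = W) p) = sum_list k
              \<and> (\<forall>i < length p. srank k p i \<ge> 0)}"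

definition area :: "nat list \<Rightarrow> letter list \<Rightarrow> int" where
  "area k p = (\<Sum>i\<leftarrow>filter (\<lambda>i. is_S (p ! i)) [0..<length p]. srank k p i)"

text \<open>Filling algorithm eta_*: a tableau is a list of columns, each column the list of its
  entries from top to bottom.\<close>
definition active_cols :: "nat list \<Rightarrow> nat list list \<Rightarrow> nat set" where
  "active_cols k T = {c. c < length T \<and> T ! c \<noteq> [] \<and> length (T ! c) < k ! c + 1}"

definition fill_step :: "nat list \<Rightarrow> nat list list \<Rightarrow> nat \<Rightarrow> letter \<Rightarrow> nat list list" where
  "fill_step k T i x =
     (if x = W then
        (let m = Max ((\<lambda>c. last (T ! c)) ` active_cols k T);
             c = (LEAST c. c \<in> active_cols k T \<and> last (T ! c) = m)
         in T[c := T ! c @ [i]])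
      else
        (let c = (LEAST c. c < length T \<and> T ! c = []) in T[c := [i]]))"

definition eta :: "nat list \<Rightarrow> letter list \<Rightarrow> nat list list" where
  "eta k p = fold (\<lambda>(i, x) T. fill_step k T i x)
                  (zip [2..<length p + 1] (tl p))
                  ((replicate (length k) [])[0 := [1]])"

definition gamma :: "nat list \<Rightarrow> nat list list \<Rightarrow> nat \<Rightarrow> int" where
  "gamma k T = fold (\<lambda>i rk.
      let \<alpha> = (if i = 0 then 0 else rk (hd (T ! i) - 1)) in
        (\<lambda>e. case find (\<lambda>q. T ! i ! q = e) [0..<length (T ! i)] of
                Some q \<Rightarrow> \<alpha> + int q
              | None \<Rightarrow> rk e))
      [0..<length k] (\<lambda>_. 0)"

definition depth :: "nat list \<Rightarrow> letter list \<Rightarrow> int" where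
  "depth k p = (let T = eta k p in \<Sum>i<length k. gamma k T (hd (T ! i)))"

text \<open>The word S^a W^x S^b W^y S^c W^z for vector (a,b,c).\<close>
definition word3 :: "nat \<Rightarrow> nat \<Rightarrow> nat \<Rightarrow> letter list" where
  "word3 x y z = [S 0] @ replicate x W @ [S 1] @ replicate y W @ [S 2] @ replicate z W"

definition theta :: "nat \<Rightarrow> nat \<Rightarrow> nat \<Rightarrow> letter list \<Rightarrow> letter list" where
  "theta a b c p =
     (let (l1, l2) = (THE (l1, l2). l1 \<le> a \<and> l1 + l2 \<le> a + b
                         \<and> p = word3 l1 l2 (a + b + c - l1 - l2))
      in if l2 \<le> b then word3 (a - l1) (b - l2) (c + l1 + l2)
         else word3 (a + b - l1 - l2) l2 (c + l1))"

end

theory Submission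
  imports Defs
begin

text \<open>An \<open>(a, b, c)\<close>-Dyck path is determined by the lengths \<open>l\<^sub>1\<close>, \<open>l\<^sub>2\<close> of its
  W-runs after \<open>S\<^sup>a\<close> and \<open>S\<^sup>b\<close>, and nonnegativity of the ranks amounts to
  \<open>l\<^sub>1 \<le> a\<close> and \<open>l\<^sub>1 + l\<^sub>2 \<le> a + b\<close>. The starting ranks of the three S-letters are
  \<open>0\<close>, \<open>a - l\<^sub>1\<close>, \<open>a + b - l\<^sub>1 - l\<^sub>2\<close>, so the area is \<open>2a + b - 2l\<^sub>1 - l\<^sub>2\<close>.
  In the filling, the first \<open>l\<^sub>1\<close> W's go below 1 in the first column; after \<open>S\<^sup>b\<close> the
  W's fill the second column below \<open>l\<^sub>1 + 2\<close> until it is full, and any further ones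
  return to the first column, which has room because \<open>l\<^sub>1 + l\<^sub>2 \<le> a + b\<close>. The entries
  placed after \<open>S\<^sup>c\<close> exceed every top entry and so do not affect the ranks of the
  first row, whence the depth is \<open>2l\<^sub>1 + l\<^sub>2\<close> if \<open>l\<^sub>2 \<le> b\<close> and \<open>2l\<^sub>1 + l\<^sub>2 - b\<close> otherwise.
  On the parameters \<open>(l\<^sub>1, l\<^sub>2)\<close>, \<open>\<theta>\<close> is an involution exchanging the two formulas.\<close>

lemma length_word3 [simp]: "length (word3 l1 l2 l3) = l1 + l2 + l3 + 3"
  by (simp add: word3_def)

lemma nth_word3:
  assumes "i < l1 + l2 + l3 + 3"
  shows "word3 l1 l2 l3 ! i =
    (if i = 0 then S 0 else if i = l1 + 1 then S 1 else if i = l1 + l2 + 2 then S 2 else W)"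
  using assms by (auto simp: word3_def nth_append nth_Cons')

lemma srank_Suc: "i < length p \<Longrightarrow> srank k p (Suc i) = srank k p i + step k (p ! i)"
  by (simp add: srank_def take_Suc_conv_app_nth)

lemma srank_word3:
  assumes "i \<le> l1 + l2 + l3 + 3"
  shows "srank [a, b, c] (word3 l1 l2 l3) i =
    (if i = 0 then 0
     else if i \<le> l1 + 1 then int a - (int i - 1)
     else if i \<le> l1 + l2 + 2 then int a + int b - (int i - 2)
     else int a + int b + int c - (int i - 3))"
  using assms
proof (induction i)
  case 0
  then show ?case by (simp add: srank_def)
next
  case (Suc i)
  then show ?case by (simp add: srank_Suc nth_word3)
qed

lemma area_word3: "area [a, b, c] (word3 l1 l2 l3) = 2 * int a + int b - 2 * int l1 - int l2"
proof -
  let ?p = "word3 l1 l2 l3"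
  let ?starts = "filter (\<lambda>i. is_S (?p ! i)) [0..<length ?p]"
  have "set ?starts = {0, l1 + 1, l1 + l2 + 2}"
    by (auto simp: nth_word3 split: if_splits)
  then have "area [a, b, c] ?p = (\<Sum>i\<in>{0, l1 + 1, l1 + l2 + 2}. srank [a, b, c] ?p i)"
    unfolding area_def by (metis distinct_filter distinct_upt sum_list_distinct_conv_sum_set)
  then show ?thesis by (simp add: srank_word3)
qed

lemma word3_in_dyck:
  assumes "l1 \<le> a" "l1 + l2 \<le> a + b"
  shows "word3 l1 l2 (a + b + c - l1 - l2) \<in> dyck [a, b, c]"
proof -
  let ?p = "word3 l1 l2 (a + b + c - l1 - l2)"
  have "filter is_S ?p = [S 0, S 1, S 2]" "length (filter (\<lambda>x. x = W) ?p) = a + b + c"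
    using assms by (simp_all add: word3_def)
  moreover have "\<forall>i < length ?p. srank [a, b, c] ?p i \<ge> 0"
    using assms by (simp add: srank_word3)
  ultimately show ?thesis by (simp add: dyck_def upt_rec)
qed

lemma replicate_W_S_eq_iff:
  "replicate n W @ S j # xs = replicate m W @ S j' # ys \<longleftrightarrow> n = m \<and> j = j' \<and> xs = ys"
  by (induction n arbitrary: m; case_tac m) auto

lemma word3_eq_iff: "word3 l1 l2 l3 = word3 m1 m2 m3 \<longleftrightarrow> l1 = m1 \<and> l2 = m2 \<and> l3 = m3"
  by (simp add: word3_def replicate_W_S_eq_iff)

lemma filter_is_S_eq_Cons:
  "filter is_S p = S j # rest \<Longrightarrow> \<exists>n q. p = replicate n W @ S j # q \<and> filter is_S q = rest"
proof (induction p)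
  case (Cons x p)
  then show ?case
  proof (cases x)
    case W
    with Cons obtain n q where "p = replicate n W @ S j # q \<and> filter is_S q = rest" by auto
    with W show ?thesis by (intro exI[of _ "Suc n"]) auto
  qed (auto intro: exI[of _ 0])
qed simp

lemma filter_is_S_eq_Nil: "filter is_S p = [] \<Longrightarrow> p = replicate (length p) W"
proof (induction p)
  case (Cons x p) then show ?case by (cases x) auto
qed simp

lemma dyck3_ex_word3:
  assumes "p \<in> dyck [a, b, c]"
  shows "\<exists>l1 l2. l1 \<le> a \<and> l1 + l2 \<le> a + b \<and> p = word3 l1 l2 (a + b + c - l1 - l2)"
proof -
  have ranks: "\<forall>i < length p. srank [a, b, c] p i \<ge> 0"
    using assms by (simp add: dyck_def)
  have "filter is_S p = [S 0, S 1, S 2]"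
    using assms by (simp add: dyck_def upt_rec)
  then obtain n l1 l2 q where
    p: "p = replicate n W @ S 0 # replicate l1 W @ S 1 # replicate l2 W @ S 2 # q" and
    "filter is_S q = []"
    by (blast dest!: filter_is_S_eq_Cons)
  then have q: "q = replicate (length q) W"
    by (simp add: filter_is_S_eq_Nil)
  have "n = 0"
  proof (rule ccontr)
    assume "n \<noteq> 0"
    then have "srank [a, b, c] p 1 = -1" "1 < length p"
      using p by (cases n; simp add: srank_def)+
    with ranks show False by force
  qed
  with p q have pw: "p = word3 l1 l2 (length q)"
    by (simp add: word3_def)
  then have "length q = a + b + c - l1 - l2"
    using assms by (auto simp: dyck_def word3_def)
  moreover have "l1 \<le> a" "l1 + l2 \<le> a + b"
    using ranks[rule_format, of "l1 + 1"] ranks[rule_format, of "l1 + l2 + 2"]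
    by (simp_all add: pw srank_word3)
  ultimately show ?thesis
    using pw by metis
qed

definition fill_word :: "nat list \<Rightarrow> nat \<Rightarrow> letter list \<Rightarrow> nat list list \<Rightarrow> nat list list" where
  "fill_word k m w T = fold (\<lambda>(i, x) T. fill_step k T i x) (zip [m..<m + length w] w) T"

lemma fill_word_Nil [simp]: "fill_word k m [] T = T"
  by (simp add: fill_word_def)

lemma fill_word_Cons [simp]: "fill_word k m (x # w) T = fill_word k (Suc m) w (fill_step k T m x)"
  by (simp add: fill_word_def upt_conv_Cons del: upt_Suc)

lemma fill_word_append:
  "fill_word k m (u @ v) T = fill_word k (m + length u) v (fill_word k m u T)"
  by (induction u arbitrary: m T) simp_all

lemma eta_eq_fill_word: "eta k p = fill_word k 2 (tl p) ((replicate (length k) [])[0 := [1]])"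
  by (cases p) (simp_all add: eta_def fill_word_def)

lemma fill_step_W_eq_update: "\<exists>c. fill_step k T i W = T[c := T ! c @ [i]]"
  by (simp add: fill_step_def Let_def) blast

lemma fill_step_W:
  assumes "x \<in> active_cols k T"
    and "\<forall>c \<in> active_cols k T. c \<noteq> x \<longrightarrow> last (T ! c) < last (T ! x)"
  shows "fill_step k T i W = T[x := T ! x @ [i]]"
proof -
  have "finite (active_cols k T)"
    by (rule finite_subset[of _ "{..<length T}"]) (auto simp: active_cols_def)
  with assms have "Max ((\<lambda>c. last (T ! c)) ` active_cols k T) = last (T ! x)"
    by (intro Max_eqI) force+
  moreover from assms have "(LEAST c. c \<in> active_cols k T \<and> last (T ! c) = last (T ! x)) = x"
    by (intro Least_equality) force+
  ultimately show ?thesis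
    by (simp add: fill_step_def Let_def)
qed

lemma fill_step_S:
  assumes "x < length T" "T ! x = []" "\<forall>c < x. T ! c \<noteq> []"
  shows "fill_step k T i (S j) = T[x := [i]]"
proof -
  from assms have "(LEAST c. c < length T \<and> T ! c = []) = x"
    by (intro Least_equality) (auto simp: not_less[symmetric])
  then show ?thesis by (simp add: fill_step_def)
qed

lemma fill_word_replicate_W_column:
  assumes "x < length T" "T ! x \<noteq> []" "length (T ! x) + n \<le> k ! x + 1" "last (T ! x) < m"
    and "\<forall>c \<in> active_cols k T. c \<noteq> x \<longrightarrow> last (T ! c) < last (T ! x)"
  shows "fill_word k m (replicate n W) T = T[x := T ! x @ [m..<m + n]]"
  using assms(3)
proof (induction n)
  case (Suc n)
  let ?T = "T[x := T ! x @ [m..<m + n]]"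
  have "last (T ! x) \<le> last (?T ! x)"
    using assms(1,4) by (cases n) simp_all
  then have "x \<in> active_cols k ?T"
    and "\<forall>c \<in> active_cols k ?T. c \<noteq> x \<longrightarrow> last (?T ! c) < last (?T ! x)"
    using assms(1,2,5) Suc.prems by (fastforce simp: active_cols_def)+
  then have "fill_step k ?T (m + n) W = ?T[x := ?T ! x @ [m + n]]"
    by (rule fill_step_W)
  then show ?case
    using Suc assms(1) by (simp add: replicate_append_same[symmetric] fill_word_append)
qed simp

definition extends_above :: "nat \<Rightarrow> nat list \<Rightarrow> nat list \<Rightarrow> bool" where
  "extends_above m xs zs \<longleftrightarrow> (\<exists>ys. zs = xs @ ys \<and> (\<forall>y \<in> set ys. m \<le> y))"

lemma extends_above_refl: "extends_above m xs xs"
  by (simp add: extends_above_def)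

lemma extends_above_snoc: "m \<le> j \<Longrightarrow> extends_above m xs (xs @ [j])"
  by (simp add: extends_above_def)

lemma list_all2_extends_above_3:
  "list_all2 (extends_above m) [X, Y, Z] E \<longleftrightarrow>
    (\<exists>ys0 ys1 ys2. E = [X @ ys0, Y @ ys1, Z @ ys2] \<and> (\<forall>y \<in> set ys0 \<union> set ys1 \<union> set ys2. m \<le> y))"
  by (auto simp: list_all2_Cons1 extends_above_def)

lemma fill_word_replicate_W_extends:
  "list_all2 (extends_above m) T (fill_word k m (replicate n W) T)"
proof (induction n)
  case 0
  show ?case
    by (simp add: list_all2_conv_all_nth extends_above_refl)
next
  case (Suc n)
  let ?T = "fill_word k m (replicate n W) T"
  obtain c where c: "fill_step k ?T (m + n) W = ?T[c := ?T ! c @ [m + n]]"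
    using fill_step_W_eq_update by blast
  have "list_all2 (extends_above m) ?T (?T[c := ?T ! c @ [m + n]])"
    by (cases "c < length ?T")
      (auto simp: list_all2_conv_all_nth nth_list_update extends_above_refl extends_above_snoc)
  then have "list_all2 (extends_above m) ?T (fill_step k ?T (m + n) W)"
    by (simp only: c)
  with Suc.IH have "list_all2 (extends_above m) T (fill_step k ?T (m + n) W)"
    by (rule list_all2_trans[rotated]) (auto simp: extends_above_def)
  then show ?case
    by (simp add: replicate_append_same[symmetric] fill_word_append)
qed

text \<open>The next two rules leave the resulting index and tableau free, so that they apply
  by \<open>rule\<close> to goals whose indices are written in a different arithmetic form.\<close>

lemma fill_word_replicate_W_column_append:
  assumes "x < length T" "T ! x \<noteq> []" "length (T ! x) + n \<le> k ! x + 1" "last (T ! x) < m"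
    and "\<forall>c \<in> active_cols k T. c \<noteq> x \<longrightarrow> last (T ! c) < last (T ! x)"
    and "T' = T[x := T ! x @ [m..<m + n]]" "m' = m + n"
  shows "fill_word k m (replicate n W @ v) T = fill_word k m' v T'"
  using fill_word_replicate_W_column[OF assms(1-5)] assms(6,7) by (simp add: fill_word_append)

lemma fill_word_Cons_eqI:
  "fill_step k T m x = T' \<Longrightarrow> m' = Suc m \<Longrightarrow> fill_word k m (x # w) T = fill_word k m' w T'"
  by simp

lemma eta_word3:
  assumes "l1 \<le> a" "l1 + l2 \<le> a + b"
  shows "list_all2 (extends_above (l1 + l2 + 4))
    [[1..<l1 + 2] @ [l1 + b + 3..<l1 + l2 + 3], [l1 + 2..<l1 + min l2 b + 3], [l1 + l2 + 3]]
    (eta [a, b, c] (word3 l1 l2 l3))"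
proof -
  let ?k = "[a, b, c]" and ?C0 = "[1..<l1 + 2] @ [l1 + b + 3..<l1 + l2 + 3]"
    and ?C1 = "[l1 + 2..<l1 + min l2 b + 3]"
  have "replicate l2 W = replicate (min l2 b) W @ replicate (l2 - b) W"
    by (simp add: replicate_add[symmetric])
  then have "eta ?k (word3 l1 l2 l3) = fill_word ?k 2
      (replicate l1 W @ S 1 # replicate (min l2 b) W @ replicate (l2 - b) W @ S 2 # replicate l3 W)
      [[1], [], []]"
    by (simp add: eta_eq_fill_word word3_def)
  also have "\<dots> = fill_word ?k (l1 + 2)
      (S 1 # replicate (min l2 b) W @ replicate (l2 - b) W @ S 2 # replicate l3 W)
      [[1..<l1 + 2], [], []]"
    by (rule fill_word_replicate_W_column_append[of 0])
      (use assms in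
        \<open>auto simp: active_cols_def less_Suc_eq numeral_3_eq_3 numeral_2_eq_2 upt_conv_Cons\<close>)
  also have "\<dots> = fill_word ?k (l1 + 3)
      (replicate (min l2 b) W @ replicate (l2 - b) W @ S 2 # replicate l3 W)
      [[1..<l1 + 2], [l1 + 2], []]"
    by (rule fill_word_Cons_eqI) (auto simp: fill_step_S[of 1])
  also have "\<dots> = fill_word ?k (l1 + min l2 b + 3)
      (replicate (l2 - b) W @ S 2 # replicate l3 W)
      [[1..<l1 + 2], ?C1, []]"
    by (rule fill_word_replicate_W_column_append[of 1])
      (use assms in \<open>auto simp: active_cols_def less_Suc_eq numeral_3_eq_3 upt_conv_Cons\<close>)
  also have "\<dots> = fill_word ?k (l1 + l2 + 3) (S 2 # replicate l3 W) [?C0, ?C1, []]"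
  proof (cases "l2 \<le> b")
    case False
    then show ?thesis
      by (intro fill_word_replicate_W_column_append[of 0])
        (use assms in \<open>auto simp: active_cols_def less_Suc_eq numeral_3_eq_3\<close>)
  qed simp
  also have "\<dots> = fill_word ?k (l1 + l2 + 4) (replicate l3 W) [?C0, ?C1, [l1 + l2 + 3]]"
    by (rule fill_word_Cons_eqI) (auto simp: fill_step_S[of 2] less_Suc_eq numeral_2_eq_2)
  finally show ?thesis
    using fill_word_replicate_W_extends by metis
qed

definition gamma_step :: "nat list list \<Rightarrow> nat \<Rightarrow> (nat \<Rightarrow> int) \<Rightarrow> nat \<Rightarrow> int" where
  "gamma_step T i rk = (let \<alpha> = (if i = 0 then 0 else rk (hd (T ! i) - 1)) in
      (\<lambda>e. case find (\<lambda>q. T ! i ! q = e) [0..<length (T ! i)] of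
              Some q \<Rightarrow> \<alpha> + int q
            | None \<Rightarrow> rk e))"

lemma gamma_eq_fold: "gamma k T = fold (gamma_step T) [0..<length k] (\<lambda>_. 0)"
  unfolding gamma_def gamma_step_def ..

lemma gamma_step_nth:
  assumes "T ! i = xs @ ys" "distinct xs" "q < length xs"
  shows "gamma_step T i rk (xs ! q) = (if i = 0 then 0 else rk (hd (T ! i) - 1)) + int q"
proof -
  have "find (\<lambda>j. T ! i ! j = xs ! q) [0..<length (T ! i)] = Some q"
    unfolding find_Some_iff using assms
    by (intro exI[of _ q]) (auto simp: nth_append nth_eq_iff_index_eq)
  then show ?thesis by (simp add: gamma_step_def)
qed

lemma gamma_step_notin: "e \<notin> set (T ! i) \<Longrightarrow> gamma_step T i rk e = rk e"
  by (simp add: gamma_step_def find_None_iff[THEN iffD2] in_set_conv_nth)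

lemma depth_length3:
  "depth [a, b, c] p =
    (let T = eta [a, b, c] p; R = gamma_step T 2 (gamma_step T 1 (gamma_step T 0 (\<lambda>_. 0)))
     in R (hd (T ! 0)) + R (hd (T ! 1)) + R (hd (T ! 2)))"
proof -
  have "[0..<length [a, b, c]] = [0, 1, 2]" "{..<length [a, b, c]} = {0, 1, 2}"
    by (auto simp: upt_rec)
  then show ?thesis
    unfolding depth_def gamma_eq_fold by (simp add: Let_def numeral_2_eq_2)
qed

lemma depth_word3:
  assumes "l1 \<le> a" "l1 + l2 \<le> a + b"
  shows "depth [a, b, c] (word3 l1 l2 l3) = 2 * int l1 + int l2 - (if l2 \<le> b then 0 else int b)"
proof -
  define C0 where "C0 = [1..<l1 + 2] @ [l1 + b + 3..<l1 + l2 + 3]"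
  define C1 where "C1 = [l1 + 2..<l1 + min l2 b + 3]"
  obtain ys0 ys1 ys2 where
    tableau: "eta [a, b, c] (word3 l1 l2 l3) = [C0 @ ys0, C1 @ ys1, [l1 + l2 + 3] @ ys2]" and
    late: "\<forall>y \<in> set ys0 \<union> set ys1 \<union> set ys2. l1 + l2 + 4 \<le> y"
    using eta_word3[OF assms] unfolding list_all2_extends_above_3 C0_def C1_def by blast
  have early: "e \<notin> set ys0" "e \<notin> set ys1" "e \<notin> set ys2" if "e \<le> l1 + l2 + 3" for e
    using late that by (auto dest!: bspec[of _ _ e])
  have C0: "distinct C0" "C0 \<noteq> []" "C0 ! 0 = 1" "C0 ! l1 = l1 + 1" "l1 < length C0"
    by (auto simp: C0_def nth_append)
  have C1: "distinct C1" "C1 \<noteq> []" "C1 ! 0 = l1 + 2" "1 \<notin> set C1"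
    by (auto simp: C1_def)
  define T where "T = [C0 @ ys0, C1 @ ys1, [l1 + l2 + 3] @ ys2]"
  define R0 where "R0 = gamma_step T 0 (\<lambda>_. 0)"
  define R1 where "R1 = gamma_step T 1 R0"
  define R2 where "R2 = gamma_step T 2 R1"
  have depth: "depth [a, b, c] (word3 l1 l2 l3) = R2 1 + R2 (l1 + 2) + R2 (l1 + l2 + 3)"
    using C0 C1 unfolding depth_length3 tableau T_def[symmetric] R2_def R1_def R0_def Let_def
    by (simp add: T_def hd_conv_nth nth_append)
  have R0: "R0 1 = 0" "R0 (l1 + 1) = int l1"
    using gamma_step_nth[of T 0 C0 ys0 0] gamma_step_nth[of T 0 C0 ys0 l1] C0
    by (simp_all add: R0_def T_def)
  have "R2 1 = 0"
    using early R0 C1 by (simp add: R2_def R1_def T_def gamma_step_notin)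
  moreover have "R2 (l1 + 2) = int l1"
    using gamma_step_nth[of T 1 C1 ys1 0] R0 early C1
    by (simp add: R2_def R1_def T_def gamma_step_notin hd_conv_nth nth_append)
  moreover have "R2 (l1 + l2 + 3) = R1 (l1 + l2 + 2)"
    using gamma_step_nth[of T 2 "[l1 + l2 + 3]" ys2 0] by (simp add: R2_def T_def)
  moreover have "R1 (l1 + l2 + 2) = int l1 + int l2 - (if l2 \<le> b then 0 else int b)"
  proof (cases "l2 \<le> b")
    case True
    then have "C1 ! l2 = l1 + l2 + 2" "l2 < length C1"
      by (simp_all add: C1_def)
    with True show ?thesis
      using gamma_step_nth[of T 1 C1 ys1 l2] R0 C1 by (simp add: R1_def T_def hd_conv_nth nth_append)
  next
    case False
    then have "C0 ! (l1 + l2 - b) = l1 + l2 + 2" "l1 + l2 - b < length C0" "l1 + l2 + 2 \<notin> set C1"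
      by (auto simp: C0_def C1_def nth_append simp del: upt_Suc)
    with False early show ?thesis
      using gamma_step_nth[of T 0 C0 ys0 "l1 + l2 - b"] C0
      by (simp add: R1_def R0_def T_def gamma_step_notin)
  qed
  ultimately show ?thesis
    using depth by simp
qed

definition dyck3_params :: "nat \<Rightarrow> nat \<Rightarrow> (nat \<times> nat) set" where
  "dyck3_params a b = {(l1, l2). l1 \<le> a \<and> l1 + l2 \<le> a + b}"

definition dyck3_word :: "nat \<Rightarrow> nat \<Rightarrow> nat \<Rightarrow> nat \<times> nat \<Rightarrow> letter list" where
  "dyck3_word a b c = (\<lambda>(l1, l2). word3 l1 l2 (a + b + c - l1 - l2))"

definition theta_params :: "nat \<Rightarrow> nat \<Rightarrow> nat \<times> nat \<Rightarrow> nat \<times> nat" where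
  "theta_params a b = (\<lambda>(l1, l2). if l2 \<le> b then (a - l1, b - l2) else (a + b - l1 - l2, l2))"

lemma dyck_eq_image_dyck3_word: "dyck [a, b, c] = dyck3_word a b c ` dyck3_params a b"
proof (intro equalityI subsetI)
  fix p assume "p \<in> dyck [a, b, c]"
  then show "p \<in> dyck3_word a b c ` dyck3_params a b"
    by (force simp: dyck3_params_def dyck3_word_def dest: dyck3_ex_word3)
next
  fix p assume "p \<in> dyck3_word a b c ` dyck3_params a b"
  then show "p \<in> dyck [a, b, c]"
    by (auto simp: dyck3_params_def dyck3_word_def simp del: diff_diff_left intro: word3_in_dyck)
qed

lemma dyck3_word_eq_iff:
  assumes "l \<in> dyck3_params a b"
  shows "(case l' of (l1, l2) \<Rightarrow> l1 \<le> a \<and> l1 + l2 \<le> a + b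
            \<and> dyck3_word a b c l = word3 l1 l2 (a + b + c - l1 - l2)) \<longleftrightarrow> l' = l"
  using assms by (auto simp: dyck3_params_def dyck3_word_def word3_eq_iff split: prod.splits)

lemma theta_dyck3_word:
  assumes "l \<in> dyck3_params a b"
  shows "theta a b c (dyck3_word a b c l) = dyck3_word a b c (theta_params a b l)"
proof -
  have "theta a b c (dyck3_word a b c l) =
      (case l of (l1, l2) \<Rightarrow> if l2 \<le> b then word3 (a - l1) (b - l2) (c + l1 + l2)
                              else word3 (a + b - l1 - l2) l2 (c + l1))"
    unfolding theta_def dyck3_word_eq_iff[OF assms] by simp
  with assms show ?thesis
    by (auto simp: dyck3_params_def dyck3_word_def theta_params_def add.assoc)
qed

lemma theta_params_mem:
  "l \<in> dyck3_params a b \<Longrightarrow> theta_params a b l \<in> dyck3_params a b"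
  by (auto simp: dyck3_params_def theta_params_def split: if_splits)

lemma theta_params_involution:
  "l \<in> dyck3_params a b \<Longrightarrow> theta_params a b (theta_params a b l) = l"
  by (auto simp: dyck3_params_def theta_params_def)

lemma depth_theta_params:
  assumes "l \<in> dyck3_params a b"
  shows "depth [a, b, c] (dyck3_word a b c (theta_params a b l)) = area [a, b, c] (dyck3_word a b c l)"
  using assms theta_params_mem[OF assms]
  by (auto simp: dyck3_params_def dyck3_word_def theta_params_def depth_word3 area_word3
      split: if_splits)

theorem proposition5p7:
  fixes a b c :: nat
  assumes "a > 0" "b > 0" "c > 0"
  shows "(\<forall>p \<in> dyck [a, b, c]. \<exists>!(l1, l2). l1 \<le> a \<and> l1 + l2 \<le> a + b
                     \<and> p = word3 l1 l2 (a + b + c - l1 - l2))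
       \<and> (\<forall>p \<in> dyck [a, b, c]. theta a b c p \<in> dyck [a, b, c]
              \<and> theta a b c (theta a b c p) = p
              \<and> area [a, b, c] p = depth [a, b, c] (theta a b c p)
              \<and> depth [a, b, c] p = area [a, b, c] (theta a b c p))"
proof (intro conjI ballI)
  fix p assume "p \<in> dyck [a, b, c]"
  then obtain l where l: "l \<in> dyck3_params a b" and p: "p = dyck3_word a b c l"
    by (auto simp: dyck_eq_image_dyck3_word)
  show "\<exists>!(l1, l2). l1 \<le> a \<and> l1 + l2 \<le> a + b \<and> p = word3 l1 l2 (a + b + c - l1 - l2)"
    unfolding p by (rule ex1I[of _ l]) (simp_all only: dyck3_word_eq_iff[OF l])
next
  fix p assume "p \<in> dyck [a, b, c]"
  then obtain l where l: "l \<in> dyck3_params a b" and p: "p = dyck3_word a b c l"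
    by (auto simp: dyck_eq_image_dyck3_word)
  let ?l' = "theta_params a b l"
  have l': "?l' \<in> dyck3_params a b" "theta_params a b ?l' = l"
    using l by (simp_all add: theta_params_mem theta_params_involution)
  have theta: "theta a b c (dyck3_word a b c l) = dyck3_word a b c ?l'"
    using l by (rule theta_dyck3_word)
  show "theta a b c p \<in> dyck [a, b, c]"
    using l' by (simp add: p theta dyck_eq_image_dyck3_word)
  show "theta a b c (theta a b c p) = p"
    using l' by (simp add: p theta theta_dyck3_word)
  show "area [a, b, c] p = depth [a, b, c] (theta a b c p)"
    using l by (simp add: p theta depth_theta_params)
  show "depth [a, b, c] p = area [a, b, c] (theta a b c p)"
    using depth_theta_params[OF l'(1)] by (simp add: p theta l')
qed

end
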